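(* Let $\Omega\subset\mathbb{R}^N$ be a domain and $p>\max\{1,\frac{2N}{N+2}\}$. Then the Banach space $\mathbb{X}_p(\Omega)$ is uniformly convex.
   Context: $\mathbb{L}^r(\Omega)=\mathrm{L}^r(\Omega)\times\mathrm{L}^r(\Omega)$ (real), $\mathbb{X}_p(\Omega):=\{U\in\mathbb{L}^2(\Omega):\nabla U\in(\mathbb{L}^p(\Omega))^N\}$ with norm $|U|_{\mathbb{X}_p}=[|U|_{\mathbb{L}^2}^p+|\nabla U|_{\mathbb{L}^p}^p]^{1/p}$ if $p\ge2$ and $|U|_{\mathbb{X}_p}=[|U|_{\mathbb{L}^2}^{p'}+|\nabla U|_{\mathbb{L}^p}^{p'}]^{1/p'}$ if $\max\{1,\frac{2N}{N+2}\}<p\le2$, where $\frac1p+\frac1{p'}=1$ and $|\nabla U|_{\mathbb{L}^p}$ is the $\mathrm{L}^p$ norm of the Euclidean length of $\nabla U\in\mathbb{R}^{2N}$. *)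

theory Defs
  imports "HOL-Analysis.Analysis"
begin

text \<open>Points of \<Omega> live in an N-dimensional Euclidean space 'a (N = DIM('a)).
  A vector field U : \<Omega> \<rightarrow> R^2 is a function 'a \<Rightarrow> real \<times> real; its gradient
  \<nabla>U \<in> R^(2N) is represented as a pair (\<nabla>U_1, \<nabla>U_2) :: 'a \<times> 'a, whose product
  norm is exactly the Euclidean length of \<nabla>U in R^(2N).\<close>

fun Ck :: "nat \<Rightarrow> ('a::euclidean_space \<Rightarrow> real) \<Rightarrow> bool" where
  "Ck 0 f = continuous_on UNIV f"
| "Ck (Suc n) f = (f differentiable_on UNIV \<and> (\<forall>v. Ck n (\<lambda>x. frechet_derivative f (at x) v)))"

definition smooth_fun :: "('a::euclidean_space \<Rightarrow> real) \<Rightarrow> bool" where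
  "smooth_fun f \<longleftrightarrow> (\<forall>n. Ck n f)"

definition test_function :: "'a::euclidean_space set \<Rightarrow> ('a \<Rightarrow> real) \<Rightarrow> bool" where
  "test_function \<Omega> \<phi> \<longleftrightarrow> smooth_fun \<phi> \<and> compact (closure {x. \<phi> x \<noteq> 0})
      \<and> closure {x. \<phi> x \<noteq> 0} \<subseteq> \<Omega>"

definition in_Lr :: "'a::euclidean_space set \<Rightarrow> real \<Rightarrow> ('a \<Rightarrow> 'b::euclidean_space) \<Rightarrow> bool" where
  "in_Lr \<Omega> r f \<longleftrightarrow> set_borel_measurable lebesgue \<Omega> f
      \<and> set_integrable lebesgue \<Omega> (\<lambda>x. norm (f x) powr r)"

definition Lr_norm :: "'a::euclidean_space set \<Rightarrow> real \<Rightarrow> ('a \<Rightarrow> 'b::euclidean_space) \<Rightarrow> real" where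
  "Lr_norm \<Omega> r f = (LINT x:\<Omega>|lebesgue. norm (f x) powr r) powr (1 / r)"

definition weak_gradient :: "'a::euclidean_space set \<Rightarrow> ('a \<Rightarrow> real \<times> real) \<Rightarrow> ('a \<Rightarrow> 'a \<times> 'a) \<Rightarrow> bool" where
  "weak_gradient \<Omega> U G \<longleftrightarrow>
     (\<forall>\<phi>. test_function \<Omega> \<phi> \<longrightarrow> (\<forall>b\<in>Basis.
        (LINT x:\<Omega>|lebesgue. frechet_derivative \<phi> (at x) b *\<^sub>R U x)
        = - (LINT x:\<Omega>|lebesgue. \<phi> x *\<^sub>R (fst (G x) \<bullet> b, snd (G x) \<bullet> b))))"

definition Xp :: "'a::euclidean_space set \<Rightarrow> real \<Rightarrow> (('a \<Rightarrow> real \<times> real) \<times> ('a \<Rightarrow> 'a \<times> 'a)) set" where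
  "Xp \<Omega> p = {(U, G). in_Lr \<Omega> 2 U \<and> in_Lr \<Omega> p G \<and> weak_gradient \<Omega> U G}"

definition Xp_norm :: "'a::euclidean_space set \<Rightarrow> real \<Rightarrow> ('a \<Rightarrow> real \<times> real) \<times> ('a \<Rightarrow> 'a \<times> 'a) \<Rightarrow> real" where
  "Xp_norm \<Omega> p UG =
     (let U = fst UG; G = snd UG; q = (if p \<ge> 2 then p else p / (p - 1))
      in (Lr_norm \<Omega> 2 U powr q + Lr_norm \<Omega> p G powr q) powr (1 / q))"

definition Xp_add :: "('a \<Rightarrow> real \<times> real) \<times> ('a \<Rightarrow> 'a \<times> 'a) \<Rightarrow> ('a \<Rightarrow> real \<times> real) \<times> ('a \<Rightarrow> 'a \<times> 'a)
    \<Rightarrow> ('a \<Rightarrow> real \<times> real) \<times> ('a \<Rightarrow> 'a::euclidean_space \<times> 'a)" where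
  "Xp_add UG VH = ((\<lambda>x. fst UG x + fst VH x), (\<lambda>x. snd UG x + snd VH x))"

definition Xp_scale :: "real \<Rightarrow> ('a \<Rightarrow> real \<times> real) \<times> ('a \<Rightarrow> 'a \<times> 'a) \<Rightarrow> ('a \<Rightarrow> real \<times> real) \<times> ('a \<Rightarrow> 'a::euclidean_space \<times> 'a)" where
  "Xp_scale c UG = ((\<lambda>x. c *\<^sub>R fst UG x), (\<lambda>x. c *\<^sub>R snd UG x))"

definition Xp_uniformly_convex :: "'a::euclidean_space set \<Rightarrow> real \<Rightarrow> bool" where
  "Xp_uniformly_convex \<Omega> p \<longleftrightarrow>
     (\<forall>\<epsilon>>0. \<exists>\<delta>>0. \<forall>u\<in>Xp \<Omega> p. \<forall>v\<in>Xp \<Omega> p.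
        Xp_norm \<Omega> p u \<le> 1 \<longrightarrow> Xp_norm \<Omega> p v \<le> 1 \<longrightarrow>
        Xp_norm \<Omega> p (Xp_add u (Xp_scale (-1) v)) \<ge> \<epsilon> \<longrightarrow>
        Xp_norm \<Omega> p (Xp_scale (1/2) (Xp_add u v)) \<le> 1 - \<delta>)"

end

theory Submission
  imports Defs
begin

text \<open>The norm of X_p is the l^q-combination, with q = max(p, p'), of the L^2-norm of U and the
  L^p-norm of the gradient. So it suffices that the functionals F \<mapsto> (\<integral> |F|^r)^(q/r) for r = 2 and
  r = p are uniformly convex, since then the norm is uniformly convex as well. For r > 1 this comes
  from a pointwise estimate: strict convexity of |.|^r on a Euclidean space and compactness of its
  unit sphere show that the Jensen gap (|a|^r + |b|^r)/2 - |(a+b)/2|^r dominates c |a-b|^r up to an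
  error \<epsilon> (|a|^r + |b|^r)/2. Integrating it gives uniform convexity of \<integral> |F|^r, and raising to the
  power q/r \<ge> 1 preserves it.\<close>

lemma powr_midpoint_le:
  fixes x y r :: real
  assumes "0 \<le> x" "0 \<le> y" "1 \<le> r"
  shows "((x + y) / 2) powr r \<le> (x powr r + y powr r) / 2"
proof (cases "x = 0 \<or> y = 0")
  case True
  have "(z / 2) powr r \<le> z powr r / 2" if "0 \<le> z" for z :: real
  proof -
    have "(2::real) \<le> 2 powr r"
      using powr_mono[of 1 r 2] assms by simp
    then have "z powr r / 2 powr r \<le> z powr r / 2"
      by (intro divide_left_mono) auto
    then show ?thesis
      using that by (simp add: powr_divide)
  qed
  then show ?thesis
    using True assms by auto
next
  case False
  then have "0 < x" "0 < y"
    using assms by auto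
  then show ?thesis
    using convex_onD[OF powr_convex[OF assms(3)], of "1/2" x y] by (simp add: field_simps)
qed

lemma powr_midpoint_less:
  fixes x y r :: real
  assumes "0 \<le> y" "y < x" "1 < r"
  shows "((x + y) / 2) powr r < (x powr r + y powr r) / 2"
proof (cases "y = 0")
  case True
  have "(2::real) < 2 powr r"
    using powr_less_mono[of 1 r 2] assms by simp
  then have "x powr r / 2 powr r < x powr r / 2"
    using assms by (intro divide_strict_left_mono) auto
  then show ?thesis
    using True by (simp add: powr_divide)
next
  case False
  define s where "s = (x + y) / 2"
  have s: "0 < y" "y < s" "s < x" "x - s = s - y"
    using assms False by (auto simp: s_def field_simps)
  have deriv: "DERIV (\<lambda>t. t powr r) z :> r * z powr (r - 1)" if "0 < z" for z
    using that by (auto intro!: derivative_eq_intros)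
  obtain z1 where z1: "s < z1" "x powr r - s powr r = (x - s) * (r * z1 powr (r - 1))"
    using MVT2[of s x "\<lambda>t. t powr r" "\<lambda>z. r * z powr (r - 1)"] deriv s by force
  obtain z2 where z2: "y < z2" "z2 < s" "s powr r - y powr r = (s - y) * (r * z2 powr (r - 1))"
    using MVT2[of y s "\<lambda>t. t powr r" "\<lambda>z. r * z powr (r - 1)"] deriv s by force
  \<comment> \<open>the derivative is strictly increasing, so the increment on [s, x] beats that on [y, s]\<close>
  have "z2 powr (r - 1) < z1 powr (r - 1)"
    using z1 z2 s assms by (intro powr_less_mono2) auto
  then have "s powr r - y powr r < x powr r - s powr r"
    using z1 z2 s assms by (simp add: mult_strict_left_mono)
  then show ?thesis
    by (simp add: s_def [symmetric])
qed

lemma powr_add_le: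
  fixes x y r :: real
  assumes "0 \<le> x" "0 \<le> y" "1 \<le> r"
  shows "(x + y) powr r \<le> 2 powr r * ((x powr r + y powr r) / 2)"
proof -
  have "(x + y) powr r = 2 powr r * ((x + y) / 2) powr r"
    using assms by (simp add: powr_divide)
  also have "\<dots> \<le> 2 powr r * ((x powr r + y powr r) / 2)"
    using powr_midpoint_le[OF assms] by (intro mult_left_mono) auto
  finally show ?thesis .
qed

lemma norm_diff_powr_le:
  fixes a b :: "'b::real_normed_vector"
  assumes "1 \<le> r"
  shows "norm (a - b) powr r \<le> 2 powr r * ((norm a powr r + norm b powr r) / 2)"
proof -
  have "norm (a - b) powr r \<le> (norm a + norm b) powr r"
    using assms norm_triangle_ineq4[of a b] by (intro powr_mono2) auto
  also have "\<dots> \<le> 2 powr r * ((norm a powr r + norm b powr r) / 2)"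
    using assms by (intro powr_add_le) auto
  finally show ?thesis .
qed

definition jensen_gap :: "real \<Rightarrow> 'b::real_normed_vector \<Rightarrow> 'b \<Rightarrow> real" where
  "jensen_gap r a b = (norm a powr r + norm b powr r) / 2 - norm ((1/2) *\<^sub>R (a + b)) powr r"

lemma jensen_gap_nonneg:
  assumes "1 \<le> r"
  shows "0 \<le> jensen_gap r a b"
proof -
  have "norm ((1/2) *\<^sub>R (a + b)) powr r \<le> ((norm a + norm b) / 2) powr r"
    using assms norm_triangle_ineq[of a b] by (intro powr_mono2) auto
  also have "\<dots> \<le> (norm a powr r + norm b powr r) / 2"
    using assms by (intro powr_midpoint_le) auto
  finally show ?thesis
    by (simp add: jensen_gap_def)
qed

lemma jensen_gap_pos:
  fixes a b :: "'b::real_inner"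
  assumes "1 < r" "a \<noteq> b"
  shows "0 < jensen_gap r a b"
proof (cases "norm a = norm b")
  case True
  have "norm (a + b) \<noteq> norm a + norm b"
    using True assms(2) unfolding norm_triangle_eq by (metis norm_eq_zero scaleR_cancel_left)
  then have "norm ((1/2) *\<^sub>R (a + b)) < (norm a + norm b) / 2"
    using norm_triangle_ineq[of a b] by simp
  then have "norm ((1/2) *\<^sub>R (a + b)) powr r < ((norm a + norm b) / 2) powr r"
    using assms by (intro powr_less_mono2) auto
  then show ?thesis
    using True by (simp add: jensen_gap_def)
next
  case False
  have "norm ((1/2) *\<^sub>R (a + b)) powr r \<le> ((norm a + norm b) / 2) powr r"
    using assms norm_triangle_ineq[of a b] by (intro powr_mono2) auto
  also have "\<dots> < (norm a powr r + norm b powr r) / 2"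
    using False assms powr_midpoint_less[of "norm b" "norm a" r] powr_midpoint_less[of "norm a" "norm b" r]
    by (cases "norm b < norm a") (auto simp: add.commute)
  finally show ?thesis
    by (simp add: jensen_gap_def)
qed

lemma jensen_gap_scaleR:
  fixes a b :: "'b::real_normed_vector"
  assumes "0 \<le> c"
  shows "jensen_gap r (c *\<^sub>R a) (c *\<^sub>R b) = c powr r * jensen_gap r a b"
proof -
  have "norm ((1/2) *\<^sub>R (c *\<^sub>R a + c *\<^sub>R b)) = c * norm ((1/2) *\<^sub>R (a + b))"
    using assms by (simp flip: scaleR_add_right)
  then show ?thesis
    using assms by (simp add: jensen_gap_def powr_mult right_diff_distrib add_divide_distrib distrib_left
        flip: times_divide_eq_right)
qed

lemma compact_pos_lower_bound:
  fixes f :: "'a::topological_space \<Rightarrow> real"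
  assumes "compact S" "continuous_on S f" "\<And>x. x \<in> S \<Longrightarrow> 0 < f x"
  obtains c where "0 < c" "\<And>x. x \<in> S \<Longrightarrow> c \<le> f x"
proof (cases "S = {}")
  case True
  then show ?thesis
    using that[of 1] by simp
next
  case False
  then obtain x0 where "x0 \<in> S" "\<And>x. x \<in> S \<Longrightarrow> f x0 \<le> f x"
    using continuous_attains_inf[OF assms(1) _ assms(2)] by blast
  then show ?thesis
    using that[of "f x0"] assms(3) by blast
qed

lemma continuous_on_norm_powr:
  fixes f :: "'a::topological_space \<Rightarrow> 'b::real_normed_vector"
  assumes "continuous_on S f" "0 < r"
  shows "continuous_on S (\<lambda>x. norm (f x) powr r)"
  using assms by (intro continuous_on_powr' continuous_on_norm continuous_on_const) auto

lemma jensen_gap_ge_on_cone: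
  fixes r \<tau> :: real
  assumes r: "1 < r" and \<tau>: "0 < \<tau>"
  obtains c where "0 < c"
    "\<And>a b::'b::euclidean_space. \<tau> * (norm a + norm b) \<le> norm (a - b) \<Longrightarrow>
       c * norm (a - b) powr r \<le> jensen_gap r a b"
proof -
  define S where "S = {z::'b \<times> 'b. norm (fst z) + norm (snd z) = 1 \<and> \<tau> \<le> norm (fst z - snd z)}"
  have "S \<subseteq> cball 0 1"
  proof
    fix z assume "z \<in> S"
    then show "z \<in> cball 0 1"
      using norm_Pair_le[of "fst z" "snd z"] by (simp add: S_def)
  qed
  moreover have "closed S"
    unfolding S_def by (intro closed_Collect_conj closed_Collect_eq closed_Collect_le continuous_intros)
  ultimately have "compact S"
    by (metis bounded_cball bounded_subset compact_eq_bounded_closed)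
  moreover have "continuous_on S (\<lambda>z. jensen_gap r (fst z) (snd z))"
    unfolding jensen_gap_def using r
    by (intro continuous_on_diff continuous_on_divide continuous_on_add continuous_on_norm_powr
        continuous_on_const continuous_on_fst continuous_on_snd continuous_on_id continuous_on_scaleR) auto
  moreover have "0 < jensen_gap r (fst z) (snd z)" if "z \<in> S" for z
    using that \<tau> r by (intro jensen_gap_pos) (auto simp: S_def)
  ultimately obtain c where c: "0 < c" "\<And>z. z \<in> S \<Longrightarrow> c \<le> jensen_gap r (fst z) (snd z)"
    by (rule compact_pos_lower_bound) blast+
  have "c * norm (a - b) powr r \<le> jensen_gap r a b"
    if cone: "\<tau> * (norm a + norm b) \<le> norm (a - b)" for a b :: 'b
  proof (cases "norm a + norm b = 0")
    case True
    then show ?thesis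
      by (simp add: jensen_gap_def add_nonneg_eq_0_iff)
  next
    case False
    define l where "l = norm a + norm b"
    have l: "0 < l"
      using False by (simp add: l_def add_pos_nonneg order_le_neq_trans)
    \<comment> \<open>rescale onto S; the gap is homogeneous of degree r\<close>
    have nl: "norm (inverse l *\<^sub>R x) = norm x / l" for x :: 'b
      using l by (simp add: divide_inverse_commute)
    have "norm (inverse l *\<^sub>R a) + norm (inverse l *\<^sub>R b) = 1"
      unfolding nl using l by (simp add: l_def flip: add_divide_distrib)
    moreover have "\<tau> \<le> norm (inverse l *\<^sub>R a - inverse l *\<^sub>R b)"
      unfolding scaleR_diff_right[symmetric] nl using l cone by (simp add: l_def pos_le_divide_eq)
    ultimately have "(inverse l *\<^sub>R a, inverse l *\<^sub>R b) \<in> S"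
      by (simp add: S_def)
    then have "c \<le> inverse l powr r * jensen_gap r a b"
      using c(2) l by (fastforce simp: jensen_gap_scaleR)
    then have "c * l powr r \<le> jensen_gap r a b"
      using l by (simp add: powr_divide field_simps)
    moreover have "norm (a - b) powr r \<le> l powr r"
      using norm_triangle_ineq4[of a b] r by (intro powr_mono2) (auto simp: l_def)
    ultimately show ?thesis
      using c(1) by (meson mult_left_mono less_imp_le order_trans)
  qed
  with c(1) show ?thesis
    using that by blast
qed

lemma jensen_gap_uniform:
  fixes r \<epsilon> :: real
  assumes r: "1 < r" and \<epsilon>: "0 < \<epsilon>"
  obtains c where "0 < c"
    "\<And>a b::'b::euclidean_space.
       c * (norm (a - b) powr r - \<epsilon> * ((norm a powr r + norm b powr r) / 2)) \<le> jensen_gap r a b"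
proof -
  \<comment> \<open>chosen so that off the cone |a - b|^r \<le> (2\<tau>)^r (|a|^r + |b|^r)/2 = \<epsilon> (|a|^r + |b|^r)/2\<close>
  define \<tau> where "\<tau> = (\<epsilon> / 2 powr r) powr (1 / r)"
  have \<tau>: "0 < \<tau>" "2 powr r * \<tau> powr r = \<epsilon>"
    using r \<epsilon> by (simp_all add: \<tau>_def powr_powr)
  obtain c where c: "0 < c" "\<And>a b::'b. \<tau> * (norm a + norm b) \<le> norm (a - b) \<Longrightarrow>
       c * norm (a - b) powr r \<le> jensen_gap r a b"
    using jensen_gap_ge_on_cone[OF r \<tau>(1)] by blast
  have "c * (norm (a - b) powr r - \<epsilon> * ((norm a powr r + norm b powr r) / 2)) \<le> jensen_gap r a b"
    for a b :: 'b
  proof (cases "\<tau> * (norm a + norm b) \<le> norm (a - b)")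
    case True
    have "0 \<le> c * (\<epsilon> * ((norm a powr r + norm b powr r) / 2))"
      using c(1) \<epsilon> by simp
    then show ?thesis
      using c(2)[OF True] by (simp add: right_diff_distrib)
  next
    case False
    have "norm (a - b) powr r \<le> (\<tau> * (norm a + norm b)) powr r"
      using False r by (intro powr_mono2) auto
    also have "\<dots> = \<tau> powr r * (norm a + norm b) powr r"
      using \<tau>(1) by (simp add: powr_mult)
    also have "\<dots> \<le> \<tau> powr r * (2 powr r * ((norm a powr r + norm b powr r) / 2))"
      using r by (intro mult_left_mono powr_add_le) auto
    also have "\<dots> = \<epsilon> * ((norm a powr r + norm b powr r) / 2)"
      by (metis \<tau>(2) mult.assoc mult.commute)
    finally have "c * (norm (a - b) powr r - \<epsilon> * ((norm a powr r + norm b powr r) / 2)) \<le> 0"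
      using c(1) by (simp add: mult_nonneg_nonpos)
    then show ?thesis
      using jensen_gap_nonneg[of r a b] r by linarith
  qed
  with c(1) show ?thesis
    using that by blast
qed

definition Lr_functions :: "'m measure \<Rightarrow> real \<Rightarrow> ('m \<Rightarrow> 'b::real_normed_vector) set" where
  "Lr_functions M r = {F \<in> borel_measurable M. integrable M (\<lambda>x. norm (F x) powr r)}"

definition Lr_modular :: "'m measure \<Rightarrow> real \<Rightarrow> ('m \<Rightarrow> 'b::real_normed_vector) \<Rightarrow> real" where
  "Lr_modular M r F = (\<integral>x. norm (F x) powr r \<partial>M)"

lemma Lr_functionsD:
  assumes "F \<in> Lr_functions M r"
  shows "F \<in> borel_measurable M" "integrable M (\<lambda>x. norm (F x) powr r)"
  using assms by (simp_all add: Lr_functions_def)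

lemma Lr_modular_nonneg: "0 \<le> Lr_modular M r F"
  unfolding Lr_modular_def by (simp add: integral_nonneg_AE)

context
  fixes M :: "'m measure" and r :: real and F G :: "'m \<Rightarrow> 'b::{real_normed_vector, second_countable_topology}"
  assumes r: "1 \<le> r" and F: "F \<in> Lr_functions M r" and G: "G \<in> Lr_functions M r"
begin

lemma integrable_mean_norm_powr:
  "integrable M (\<lambda>x. (norm (F x) powr r + norm (G x) powr r) / 2)"
  using Lr_functionsD(2)[OF F] Lr_functionsD(2)[OF G] by simp

lemma integral_mean_norm_powr:
  "(\<integral>x. (norm (F x) powr r + norm (G x) powr r) / 2 \<partial>M) = (Lr_modular M r F + Lr_modular M r G) / 2"
  using Lr_functionsD(2)[OF F] Lr_functionsD(2)[OF G] by (simp add: Lr_modular_def)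

lemma integrable_norm_midpoint_powr:
  "integrable M (\<lambda>x. norm ((1/2) *\<^sub>R (F x + G x)) powr r)"
proof (rule Bochner_Integration.integrable_bound[OF integrable_mean_norm_powr])
  show "(\<lambda>x. norm ((1/2) *\<^sub>R (F x + G x)) powr r) \<in> borel_measurable M"
    using Lr_functionsD(1)[OF F] Lr_functionsD(1)[OF G] by measurable
  show "AE x in M. norm (norm ((1/2) *\<^sub>R (F x + G x)) powr r)
      \<le> norm ((norm (F x) powr r + norm (G x) powr r) / 2)"
    by (rule AE_I2) (use jensen_gap_nonneg[OF r, of "F x" "G x" for x] in \<open>simp add: jensen_gap_def\<close>)
qed

lemma integrable_norm_diff_powr:
  "integrable M (\<lambda>x. norm (F x - G x) powr r)"
proof (rule Bochner_Integration.integrable_bound[OF integrable_mult_right[OF integrable_mean_norm_powr]])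
  show "(\<lambda>x. norm (F x - G x) powr r) \<in> borel_measurable M"
    using Lr_functionsD(1)[OF F] Lr_functionsD(1)[OF G] by measurable
  show "AE x in M. norm (norm (F x - G x) powr r)
      \<le> norm (2 powr r * ((norm (F x) powr r + norm (G x) powr r) / 2))"
    by (rule AE_I2) (use norm_diff_powr_le[OF r, of "F x" "G x" for x] in simp)
qed

lemma integrable_jensen_gap:
  "integrable M (\<lambda>x. jensen_gap r (F x) (G x))"
  unfolding jensen_gap_def
  by (rule Bochner_Integration.integrable_diff[OF integrable_mean_norm_powr integrable_norm_midpoint_powr])

lemma integral_jensen_gap:
  "(\<integral>x. jensen_gap r (F x) (G x) \<partial>M)
     = (Lr_modular M r F + Lr_modular M r G) / 2 - Lr_modular M r (\<lambda>x. (1/2) *\<^sub>R (F x + G x))"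
  unfolding jensen_gap_def Lr_modular_def[of M r "\<lambda>x. (1/2) *\<^sub>R (F x + G x)"]
    integral_mean_norm_powr[symmetric]
  by (rule Bochner_Integration.integral_diff[OF integrable_mean_norm_powr integrable_norm_midpoint_powr])

lemma Lr_modular_midpoint_le:
  "Lr_modular M r (\<lambda>x. (1/2) *\<^sub>R (F x + G x)) \<le> (Lr_modular M r F + Lr_modular M r G) / 2"
proof -
  have "0 \<le> (\<integral>x. jensen_gap r (F x) (G x) \<partial>M)"
    by (rule integral_nonneg_AE) (simp add: jensen_gap_nonneg[OF r])
  then show ?thesis
    by (simp add: integral_jensen_gap)
qed

lemma Lr_modular_diff_le:
  "Lr_modular M r (\<lambda>x. F x - G x) \<le> 2 powr r * ((Lr_modular M r F + Lr_modular M r G) / 2)"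
proof -
  have "Lr_modular M r (\<lambda>x. F x - G x) \<le> (\<integral>x. 2 powr r * ((norm (F x) powr r + norm (G x) powr r) / 2) \<partial>M)"
    unfolding Lr_modular_def
    using integrable_norm_diff_powr integrable_mult_right[OF integrable_mean_norm_powr] norm_diff_powr_le[OF r]
    by (intro integral_mono) auto
  then show ?thesis
    unfolding integral_mult_right_zero integral_mean_norm_powr .
qed

end

lemma Lr_modular_uniformly_convex:
  fixes r \<epsilon> :: real
  assumes r: "1 < r" and \<epsilon>: "0 < \<epsilon>"
  shows "\<exists>\<delta>>0. \<delta> \<le> 1 \<and> (\<forall>F \<in> Lr_functions M r :: ('m \<Rightarrow> 'b::euclidean_space) set. \<forall>G \<in> Lr_functions M r.
       \<epsilon> * ((Lr_modular M r F + Lr_modular M r G) / 2) \<le> Lr_modular M r (\<lambda>x. F x - G x) \<longrightarrow>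
       Lr_modular M r (\<lambda>x. (1/2) *\<^sub>R (F x + G x)) \<le> (1 - \<delta>) * ((Lr_modular M r F + Lr_modular M r G) / 2))"
proof -
  obtain c where c: "0 < c"
    "\<And>a b::'b. c * (norm (a - b) powr r - \<epsilon> / 2 * ((norm a powr r + norm b powr r) / 2)) \<le> jensen_gap r a b"
    using jensen_gap_uniform[OF r, of "\<epsilon> / 2"] \<epsilon> by auto
  define \<delta> where "\<delta> = min (c * \<epsilon> / 2) 1"
  have "Lr_modular M r (\<lambda>x. (1/2) *\<^sub>R (F x + G x)) \<le> (1 - \<delta>) * ((Lr_modular M r F + Lr_modular M r G) / 2)"
    if F: "F \<in> Lr_functions M r" and G: "G \<in> Lr_functions M r"
      and far: "\<epsilon> * ((Lr_modular M r F + Lr_modular M r G) / 2) \<le> Lr_modular M r (\<lambda>x. F x - G x)"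
    for F G :: "'m \<Rightarrow> 'b"
  proof -
    define A where "A = (Lr_modular M r F + Lr_modular M r G) / 2"
    have r1: "1 \<le> r"
      using r by simp
    note integrable = Lr_functionsD(2)[OF F] Lr_functionsD(2)[OF G] integrable_norm_diff_powr[OF r1 F G]
    have "c * (Lr_modular M r (\<lambda>x. F x - G x) - \<epsilon> / 2 * A)
        = (\<integral>x. c * (norm (F x - G x) powr r - \<epsilon> / 2 * ((norm (F x) powr r + norm (G x) powr r) / 2)) \<partial>M)"
      using integrable by (simp add: A_def Lr_modular_def)
    also have "\<dots> \<le> (\<integral>x. jensen_gap r (F x) (G x) \<partial>M)"
      using c(2) integrable integrable_jensen_gap[OF r1 F G] by (intro integral_mono) auto
    finally have "c * (Lr_modular M r (\<lambda>x. F x - G x) - \<epsilon> / 2 * A)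
        \<le> A - Lr_modular M r (\<lambda>x. (1/2) *\<^sub>R (F x + G x))"
      by (simp add: integral_jensen_gap[OF r1 F G] A_def)
    moreover have "c * (\<epsilon> / 2 * A) \<le> c * (Lr_modular M r (\<lambda>x. F x - G x) - \<epsilon> / 2 * A)"
      using far c(1) by (intro mult_left_mono) (auto simp: A_def)
    ultimately have "Lr_modular M r (\<lambda>x. (1/2) *\<^sub>R (F x + G x)) \<le> A - c * (\<epsilon> / 2 * A)"
      by linarith
    also have "\<dots> = (1 - c * \<epsilon> / 2) * A"
      by (simp add: algebra_simps)
    also have "\<dots> \<le> (1 - \<delta>) * A"
      using Lr_modular_nonneg[of M r F] Lr_modular_nonneg[of M r G]
      by (intro mult_right_mono) (auto simp: A_def \<delta>_def)
    finally show ?thesis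
      unfolding A_def .
  qed
  moreover have "0 < \<delta>" "\<delta> \<le> 1"
    using c(1) \<epsilon> by (auto simp: \<delta>_def)
  ultimately show ?thesis
    by blast
qed

definition midpoint_convex_functional :: "('m \<Rightarrow> 'b::real_vector) set \<Rightarrow> (('m \<Rightarrow> 'b) \<Rightarrow> real) \<Rightarrow> bool" where
  "midpoint_convex_functional S \<Phi> \<longleftrightarrow>
     (\<forall>F\<in>S. \<forall>G\<in>S. \<Phi> (\<lambda>x. (1/2) *\<^sub>R (F x + G x)) \<le> (\<Phi> F + \<Phi> G) / 2)"

definition uniformly_convex_functional :: "('m \<Rightarrow> 'b::real_vector) set \<Rightarrow> (('m \<Rightarrow> 'b) \<Rightarrow> real) \<Rightarrow> bool" where
  "uniformly_convex_functional S \<Phi> \<longleftrightarrow>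
     (\<forall>e>0. \<exists>\<kappa>>0. \<forall>F\<in>S. \<forall>G\<in>S. \<Phi> F \<le> 1 \<longrightarrow> \<Phi> G \<le> 1 \<longrightarrow> e \<le> \<Phi> (\<lambda>x. F x - G x) \<longrightarrow>
        \<Phi> (\<lambda>x. (1/2) *\<^sub>R (F x + G x)) \<le> (\<Phi> F + \<Phi> G) / 2 - \<kappa>)"

lemma powr_le_powr_cancel:
  fixes x y t :: real
  assumes "0 < t" "0 \<le> y" "x powr t \<le> y powr t"
  shows "x \<le> y"
  using assms powr_less_mono2[of t y x] by linarith

lemma powr_midpoint_gap:
  fixes a b m \<delta> t :: real
  assumes "1 \<le> t" "0 \<le> \<delta>" "\<delta> \<le> 1" "0 \<le> a" "0 \<le> b" "0 \<le> m" "m \<le> (1 - \<delta>) * ((a + b) / 2)"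
  shows "m powr t \<le> (a powr t + b powr t) / 2 - \<delta> * ((a + b) / 2) powr t"
proof -
  have "m powr t \<le> ((1 - \<delta>) * ((a + b) / 2)) powr t"
    using assms by (intro powr_mono2) auto
  also have "\<dots> = (1 - \<delta>) powr t * ((a + b) / 2) powr t"
    by (rule powr_mult)
  also have "\<dots> \<le> (1 - \<delta>) * ((a + b) / 2) powr t"
    using powr_mono'[of 1 t "1 - \<delta>"] assms by (intro mult_right_mono) auto
  also have "\<dots> \<le> (a powr t + b powr t) / 2 - \<delta> * ((a + b) / 2) powr t"
    using powr_midpoint_le[of a b t] assms by (simp add: algebra_simps)
  finally show ?thesis .
qed

lemma midpoint_convex_functional_powr:
  fixes \<rho> :: "('m \<Rightarrow> 'b::real_vector) \<Rightarrow> real"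
  assumes t: "1 \<le> t" and nonneg: "\<And>F. 0 \<le> \<rho> F" and mid: "midpoint_convex_functional S \<rho>"
  shows "midpoint_convex_functional S (\<lambda>F. \<rho> F powr t)"
  unfolding midpoint_convex_functional_def
proof (intro ballI)
  fix F G assume "F \<in> S" "G \<in> S"
  then have "\<rho> (\<lambda>x. (1/2) *\<^sub>R (F x + G x)) powr t \<le> ((\<rho> F + \<rho> G) / 2) powr t"
    using t nonneg mid by (intro powr_mono2) (auto simp: midpoint_convex_functional_def)
  also have "\<dots> \<le> (\<rho> F powr t + \<rho> G powr t) / 2"
    using t nonneg by (intro powr_midpoint_le) auto
  finally show "\<rho> (\<lambda>x. (1/2) *\<^sub>R (F x + G x)) powr t \<le> (\<rho> F powr t + \<rho> G powr t) / 2" .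
qed

lemma uniformly_convex_functional_powr:
  fixes \<rho> :: "('m \<Rightarrow> 'b::real_vector) \<Rightarrow> real"
  assumes t: "1 \<le> t" and C: "0 < C" and nonneg: "\<And>F. 0 \<le> \<rho> F"
    and diff_le: "\<And>F G. F \<in> S \<Longrightarrow> G \<in> S \<Longrightarrow> \<rho> (\<lambda>x. F x - G x) \<le> C * ((\<rho> F + \<rho> G) / 2)"
    and rel: "\<And>\<epsilon>. 0 < \<epsilon> \<Longrightarrow> \<exists>\<delta>>0. \<delta> \<le> 1 \<and> (\<forall>F\<in>S. \<forall>G\<in>S.
       \<epsilon> * ((\<rho> F + \<rho> G) / 2) \<le> \<rho> (\<lambda>x. F x - G x) \<longrightarrow>
       \<rho> (\<lambda>x. (1/2) *\<^sub>R (F x + G x)) \<le> (1 - \<delta>) * ((\<rho> F + \<rho> G) / 2))"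
  shows "uniformly_convex_functional S (\<lambda>F. \<rho> F powr t)"
  unfolding uniformly_convex_functional_def
proof (intro allI impI)
  fix e :: real assume e: "0 < e"
  obtain \<delta> where \<delta>: "0 < \<delta>" "\<delta> \<le> 1" and rel_e: "\<forall>F\<in>S. \<forall>G\<in>S.
      e powr (1 / t) * ((\<rho> F + \<rho> G) / 2) \<le> \<rho> (\<lambda>x. F x - G x) \<longrightarrow>
      \<rho> (\<lambda>x. (1/2) *\<^sub>R (F x + G x)) \<le> (1 - \<delta>) * ((\<rho> F + \<rho> G) / 2)"
    using rel[of "e powr (1 / t)"] e by auto
  have t0: "0 < t"
    using t by simp
  \<comment> \<open>far-apart pairs have mean at least (e / C^t)^(1/t), which turns the factor 1 - \<delta> into a gap\<close>
  show "\<exists>\<kappa>>0. \<forall>F\<in>S. \<forall>G\<in>S. \<rho> F powr t \<le> 1 \<longrightarrow> \<rho> G powr t \<le> 1 \<longrightarrow> e \<le> \<rho> (\<lambda>x. F x - G x) powr t \<longrightarrow>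
      \<rho> (\<lambda>x. (1/2) *\<^sub>R (F x + G x)) powr t \<le> (\<rho> F powr t + \<rho> G powr t) / 2 - \<kappa>"
  proof (intro exI[of _ "\<delta> * (e / C powr t)"] conjI ballI impI)
    show "0 < \<delta> * (e / C powr t)"
      using \<delta> e C by simp
    fix F G assume F: "F \<in> S" and G: "G \<in> S"
      and small: "\<rho> F powr t \<le> 1" "\<rho> G powr t \<le> 1" and far: "e \<le> \<rho> (\<lambda>x. F x - G x) powr t"
    define Y where "Y = (\<rho> F + \<rho> G) / 2"
    have "\<rho> F \<le> 1" "\<rho> G \<le> 1"
      using small powr_le_powr_cancel[OF t0, of 1] by auto
    then have Y: "0 \<le> Y" "Y \<le> 1"
      using nonneg[of F] nonneg[of G] by (auto simp: Y_def)
    have "(e powr (1 / t)) powr t \<le> \<rho> (\<lambda>x. F x - G x) powr t"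
      using far t0 e by (simp add: powr_powr)
    then have "e powr (1 / t) \<le> \<rho> (\<lambda>x. F x - G x)"
      by (rule powr_le_powr_cancel[OF t0 nonneg])
    then have "e powr (1 / t) * Y \<le> \<rho> (\<lambda>x. F x - G x)"
      using Y by (meson mult_left_le order_trans powr_ge_zero)
    then have "\<rho> (\<lambda>x. (1/2) *\<^sub>R (F x + G x)) \<le> (1 - \<delta>) * Y"
      using rel_e F G by (simp add: Y_def)
    then have gap: "\<rho> (\<lambda>x. (1/2) *\<^sub>R (F x + G x)) powr t \<le> (\<rho> F powr t + \<rho> G powr t) / 2 - \<delta> * Y powr t"
      unfolding Y_def using t \<delta> nonneg by (intro powr_midpoint_gap) auto
    have "\<rho> (\<lambda>x. F x - G x) powr t \<le> (C * Y) powr t"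
      using diff_le[OF F G] t0 nonneg by (intro powr_mono2) (auto simp: Y_def)
    also have "\<dots> = C powr t * Y powr t"
      using Y C by (simp add: powr_mult)
    finally have "e / C powr t \<le> Y powr t"
      using far C by (simp add: pos_divide_le_eq mult.commute)
    with gap \<delta> show "\<rho> (\<lambda>x. (1/2) *\<^sub>R (F x + G x)) powr t
        \<le> (\<rho> F powr t + \<rho> G powr t) / 2 - \<delta> * (e / C powr t)"
      by (smt (verit) mult_left_mono)
  qed
qed

lemma Lr_modular_midpoint_convex:
  assumes "1 \<le> r"
  shows "midpoint_convex_functional (Lr_functions M r)
    (Lr_modular M r :: ('m \<Rightarrow> 'b::{real_normed_vector, second_countable_topology}) \<Rightarrow> real)"
  using Lr_modular_midpoint_le[OF assms] by (auto simp: midpoint_convex_functional_def)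

lemma Lr_modular_powr_uniformly_convex:
  assumes "1 < r" "1 \<le> t"
  shows "uniformly_convex_functional (Lr_functions M r)
    (\<lambda>F::'m \<Rightarrow> 'b::euclidean_space. Lr_modular M r F powr t)"
  using assms
  by (intro uniformly_convex_functional_powr[where C = "2 powr r"] Lr_modular_nonneg
      Lr_modular_diff_le Lr_modular_uniformly_convex) auto

lemma uniformly_convex_functional_add:
  fixes \<Phi> :: "('m \<Rightarrow> 'b::real_vector) \<Rightarrow> real" and \<Psi> :: "('n \<Rightarrow> 'c::real_vector) \<Rightarrow> real"
  assumes nonneg: "\<And>F. 0 \<le> \<Phi> F" "\<And>F'. 0 \<le> \<Psi> F'"
    and mid: "midpoint_convex_functional S \<Phi>" "midpoint_convex_functional T \<Psi>"
    and uc: "uniformly_convex_functional S \<Phi>" "uniformly_convex_functional T \<Psi>"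
    and e: "0 < e"
  obtains \<kappa> where "0 < \<kappa>"
    "\<And>F G F' G'. F \<in> S \<Longrightarrow> G \<in> S \<Longrightarrow> F' \<in> T \<Longrightarrow> G' \<in> T \<Longrightarrow>
       \<Phi> F + \<Psi> F' \<le> 1 \<Longrightarrow> \<Phi> G + \<Psi> G' \<le> 1 \<Longrightarrow>
       e \<le> \<Phi> (\<lambda>x. F x - G x) + \<Psi> (\<lambda>x. F' x - G' x) \<Longrightarrow>
       \<Phi> (\<lambda>x. (1/2) *\<^sub>R (F x + G x)) + \<Psi> (\<lambda>x. (1/2) *\<^sub>R (F' x + G' x)) \<le> 1 - \<kappa>"
proof -
  have e2: "0 < e / 2"
    using e by simp
  obtain \<kappa>1 where "0 < \<kappa>1" and \<kappa>1: "\<forall>F\<in>S. \<forall>G\<in>S. \<Phi> F \<le> 1 \<longrightarrow> \<Phi> G \<le> 1 \<longrightarrow>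
      e / 2 \<le> \<Phi> (\<lambda>x. F x - G x) \<longrightarrow> \<Phi> (\<lambda>x. (1/2) *\<^sub>R (F x + G x)) \<le> (\<Phi> F + \<Phi> G) / 2 - \<kappa>1"
    using uc(1) e2 unfolding uniformly_convex_functional_def by blast
  obtain \<kappa>2 where "0 < \<kappa>2" and \<kappa>2: "\<forall>F\<in>T. \<forall>G\<in>T. \<Psi> F \<le> 1 \<longrightarrow> \<Psi> G \<le> 1 \<longrightarrow>
      e / 2 \<le> \<Psi> (\<lambda>x. F x - G x) \<longrightarrow> \<Psi> (\<lambda>x. (1/2) *\<^sub>R (F x + G x)) \<le> (\<Psi> F + \<Psi> G) / 2 - \<kappa>2"
    using uc(2) e2 unfolding uniformly_convex_functional_def by blast
  show ?thesis
  proof (rule that[of "min \<kappa>1 \<kappa>2"])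
    show "0 < min \<kappa>1 \<kappa>2"
      using \<open>0 < \<kappa>1\<close> \<open>0 < \<kappa>2\<close> by simp
    fix F G F' G'
    assume mem: "F \<in> S" "G \<in> S" "F' \<in> T" "G' \<in> T"
      and small: "\<Phi> F + \<Psi> F' \<le> 1" "\<Phi> G + \<Psi> G' \<le> 1"
      and far: "e \<le> \<Phi> (\<lambda>x. F x - G x) + \<Psi> (\<lambda>x. F' x - G' x)"
    have "\<Phi> F \<le> 1" "\<Phi> G \<le> 1" "\<Psi> F' \<le> 1" "\<Psi> G' \<le> 1"
      using small nonneg(1)[of F] nonneg(1)[of G] nonneg(2)[of F'] nonneg(2)[of G'] by linarith+
    have mid_bounds: "\<Phi> (\<lambda>x. (1/2) *\<^sub>R (F x + G x)) \<le> (\<Phi> F + \<Phi> G) / 2"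
      "\<Psi> (\<lambda>x. (1/2) *\<^sub>R (F' x + G' x)) \<le> (\<Psi> F' + \<Psi> G') / 2"
      using mid mem by (auto simp: midpoint_convex_functional_def)
    consider "e / 2 \<le> \<Phi> (\<lambda>x. F x - G x)" | "e / 2 \<le> \<Psi> (\<lambda>x. F' x - G' x)"
      using far by linarith
    then show "\<Phi> (\<lambda>x. (1/2) *\<^sub>R (F x + G x)) + \<Psi> (\<lambda>x. (1/2) *\<^sub>R (F' x + G' x)) \<le> 1 - min \<kappa>1 \<kappa>2"
    proof cases
      case 1
      with \<kappa>1 mem \<open>\<Phi> F \<le> 1\<close> \<open>\<Phi> G \<le> 1\<close>
      have "\<Phi> (\<lambda>x. (1/2) *\<^sub>R (F x + G x)) \<le> (\<Phi> F + \<Phi> G) / 2 - \<kappa>1"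
        by blast
      with mid_bounds small min.cobounded1[of \<kappa>1 \<kappa>2] show ?thesis
        by argo
    next
      case 2
      with \<kappa>2 mem \<open>\<Psi> F' \<le> 1\<close> \<open>\<Psi> G' \<le> 1\<close>
      have "\<Psi> (\<lambda>x. (1/2) *\<^sub>R (F' x + G' x)) \<le> (\<Psi> F' + \<Psi> G') / 2 - \<kappa>2"
        by blast
      with mid_bounds small min.cobounded2[of \<kappa>1 \<kappa>2] show ?thesis
        by argo
    qed
  qed
qed

lemma uniformly_convex_functional_add_root:
  fixes \<Phi> :: "('m \<Rightarrow> 'b::real_vector) \<Rightarrow> real" and \<Psi> :: "('n \<Rightarrow> 'c::real_vector) \<Rightarrow> real"
  assumes nonneg: "\<And>F. 0 \<le> \<Phi> F" "\<And>F'. 0 \<le> \<Psi> F'"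
    and mid: "midpoint_convex_functional S \<Phi>" "midpoint_convex_functional T \<Psi>"
    and uc: "uniformly_convex_functional S \<Phi>" "uniformly_convex_functional T \<Psi>"
    and q: "0 < q" and \<epsilon>: "0 < \<epsilon>"
  obtains \<delta> where "0 < \<delta>"
    "\<And>F G F' G'. F \<in> S \<Longrightarrow> G \<in> S \<Longrightarrow> F' \<in> T \<Longrightarrow> G' \<in> T \<Longrightarrow>
       (\<Phi> F + \<Psi> F') powr (1 / q) \<le> 1 \<Longrightarrow> (\<Phi> G + \<Psi> G') powr (1 / q) \<le> 1 \<Longrightarrow>
       \<epsilon> \<le> (\<Phi> (\<lambda>x. F x - G x) + \<Psi> (\<lambda>x. F' x - G' x)) powr (1 / q) \<Longrightarrow>
       (\<Phi> (\<lambda>x. (1/2) *\<^sub>R (F x + G x)) + \<Psi> (\<lambda>x. (1/2) *\<^sub>R (F' x + G' x))) powr (1 / q) \<le> 1 - \<delta>"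
proof -
  obtain \<kappa> where "0 < \<kappa>" and \<kappa>: "\<And>F G F' G'. F \<in> S \<Longrightarrow> G \<in> S \<Longrightarrow> F' \<in> T \<Longrightarrow> G' \<in> T \<Longrightarrow>
       \<Phi> F + \<Psi> F' \<le> 1 \<Longrightarrow> \<Phi> G + \<Psi> G' \<le> 1 \<Longrightarrow>
       \<epsilon> powr q \<le> \<Phi> (\<lambda>x. F x - G x) + \<Psi> (\<lambda>x. F' x - G' x) \<Longrightarrow>
       \<Phi> (\<lambda>x. (1/2) *\<^sub>R (F x + G x)) + \<Psi> (\<lambda>x. (1/2) *\<^sub>R (F' x + G' x)) \<le> 1 - \<kappa>"
    using uniformly_convex_functional_add[OF nonneg mid uc, of "\<epsilon> powr q"] \<epsilon> by auto
  define k where "k = min \<kappa> (1/2)"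
  have k: "0 < k" "k \<le> \<kappa>" "k < 1"
    using \<open>0 < \<kappa>\<close> by (auto simp: k_def)
  have q': "0 < 1 / q"
    using q by simp
  show ?thesis
  proof (rule that[of "1 - (1 - k) powr (1 / q)"])
    have "(1 - k) powr (1 / q) < 1 powr (1 / q)"
      using k q' by (intro powr_less_mono2) auto
    then show "0 < 1 - (1 - k) powr (1 / q)"
      by simp
    fix F G F' G'
    assume mem: "F \<in> S" "G \<in> S" "F' \<in> T" "G' \<in> T"
      and small: "(\<Phi> F + \<Psi> F') powr (1 / q) \<le> 1" "(\<Phi> G + \<Psi> G') powr (1 / q) \<le> 1"
      and far: "\<epsilon> \<le> (\<Phi> (\<lambda>x. F x - G x) + \<Psi> (\<lambda>x. F' x - G' x)) powr (1 / q)"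
    have "\<Phi> F + \<Psi> F' \<le> 1" "\<Phi> G + \<Psi> G' \<le> 1"
      using small powr_le_powr_cancel[OF q', of 1] by auto
    moreover have "\<epsilon> powr q \<le> \<Phi> (\<lambda>x. F x - G x) + \<Psi> (\<lambda>x. F' x - G' x)"
    proof -
      have "\<epsilon> powr q \<le> ((\<Phi> (\<lambda>x. F x - G x) + \<Psi> (\<lambda>x. F' x - G' x)) powr (1 / q)) powr q"
        using far \<epsilon> q by (intro powr_mono2) auto
      then show ?thesis
        using q nonneg by (simp add: powr_powr add_nonneg_nonneg)
    qed
    ultimately have "\<Phi> (\<lambda>x. (1/2) *\<^sub>R (F x + G x)) + \<Psi> (\<lambda>x. (1/2) *\<^sub>R (F' x + G' x)) \<le> 1 - k"
      using \<kappa>[OF mem] k by fastforce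
    then show "(\<Phi> (\<lambda>x. (1/2) *\<^sub>R (F x + G x)) + \<Psi> (\<lambda>x. (1/2) *\<^sub>R (F' x + G' x))) powr (1 / q)
        \<le> 1 - (1 - (1 - k) powr (1 / q))"
      using nonneg q' by (simp add: powr_mono2 add_nonneg_nonneg)
  qed
qed

definition zero_extension :: "'a set \<Rightarrow> ('a \<Rightarrow> 'b::real_vector) \<Rightarrow> 'a \<Rightarrow> 'b" where
  "zero_extension \<Omega> f x = indicator \<Omega> x *\<^sub>R f x"

lemma norm_zero_extension_powr:
  "norm (zero_extension \<Omega> f x) powr r = indicator \<Omega> x * norm (f x) powr r"
  by (simp add: zero_extension_def indicator_def)

lemma in_Lr_imp_zero_extension:
  "in_Lr \<Omega> r f \<Longrightarrow> zero_extension \<Omega> f \<in> Lr_functions lebesgue r"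
  unfolding in_Lr_def Lr_functions_def set_borel_measurable_def set_integrable_def mem_Collect_eq
    norm_zero_extension_powr
  by (simp add: zero_extension_def [abs_def])

lemma Lr_norm_eq_Lr_modular:
  "Lr_norm \<Omega> r f = Lr_modular lebesgue r (zero_extension \<Omega> f) powr (1 / r)"
  by (simp add: Lr_norm_def Lr_modular_def set_lebesgue_integral_def norm_zero_extension_powr)

lemma zero_extension_diff:
  "zero_extension \<Omega> (\<lambda>x. f x - g x) = (\<lambda>x. zero_extension \<Omega> f x - zero_extension \<Omega> g x)"
  by (simp add: zero_extension_def fun_eq_iff algebra_simps)

lemma zero_extension_midpoint:
  "zero_extension \<Omega> (\<lambda>x. (1/2) *\<^sub>R (f x + g x))
     = (\<lambda>x. (1/2) *\<^sub>R (zero_extension \<Omega> f x + zero_extension \<Omega> g x))"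
  by (simp add: zero_extension_def fun_eq_iff algebra_simps)

definition Xp_exponent :: "real \<Rightarrow> real" where
  "Xp_exponent p = (if 2 \<le> p then p else p / (p - 1))"

lemma Xp_exponent_ge:
  assumes "1 < p"
  shows "2 \<le> Xp_exponent p" "p \<le> Xp_exponent p"
  using assms by (auto simp: Xp_exponent_def field_simps)

lemma Xp_norm_eq:
  "Xp_norm \<Omega> p (U, G) =
     (Lr_modular lebesgue 2 (zero_extension \<Omega> U) powr (Xp_exponent p / 2)
      + Lr_modular lebesgue p (zero_extension \<Omega> G) powr (Xp_exponent p / p)) powr (1 / Xp_exponent p)"
  by (simp add: Xp_norm_def Xp_exponent_def Lr_norm_eq_Lr_modular Lr_modular_nonneg powr_powr)

lemma Xp_uniformly_convexI:
  fixes \<Phi> :: "('a::euclidean_space \<Rightarrow> real \<times> real) \<Rightarrow> real" and \<Psi> :: "('a \<Rightarrow> 'a \<times> 'a) \<Rightarrow> real"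
  assumes nonneg: "\<And>F. 0 \<le> \<Phi> F" "\<And>F'. 0 \<le> \<Psi> F'"
    and mid: "midpoint_convex_functional (Lr_functions lebesgue 2) \<Phi>"
      "midpoint_convex_functional (Lr_functions lebesgue p) \<Psi>"
    and uc: "uniformly_convex_functional (Lr_functions lebesgue 2) \<Phi>"
      "uniformly_convex_functional (Lr_functions lebesgue p) \<Psi>"
    and q: "0 < q"
    and norm: "\<And>U G. Xp_norm \<Omega> p (U, G) = (\<Phi> (zero_extension \<Omega> U) + \<Psi> (zero_extension \<Omega> G)) powr (1 / q)"
  shows "Xp_uniformly_convex \<Omega> p"
  unfolding Xp_uniformly_convex_def
proof (intro allI impI)
  fix \<epsilon> :: real assume "0 < \<epsilon>"
  obtain \<delta> where "0 < \<delta>" and \<delta>: "\<And>F G F' G'.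
       F \<in> Lr_functions lebesgue 2 \<Longrightarrow> G \<in> Lr_functions lebesgue 2 \<Longrightarrow>
       F' \<in> Lr_functions lebesgue p \<Longrightarrow> G' \<in> Lr_functions lebesgue p \<Longrightarrow>
       (\<Phi> F + \<Psi> F') powr (1 / q) \<le> 1 \<Longrightarrow> (\<Phi> G + \<Psi> G') powr (1 / q) \<le> 1 \<Longrightarrow>
       \<epsilon> \<le> (\<Phi> (\<lambda>x. F x - G x) + \<Psi> (\<lambda>x. F' x - G' x)) powr (1 / q) \<Longrightarrow>
       (\<Phi> (\<lambda>x. (1/2) *\<^sub>R (F x + G x)) + \<Psi> (\<lambda>x. (1/2) *\<^sub>R (F' x + G' x))) powr (1 / q) \<le> 1 - \<delta>"
    using uniformly_convex_functional_add_root[OF nonneg mid uc q \<open>0 < \<epsilon>\<close>] by blast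
  show "\<exists>\<delta>>0. \<forall>u\<in>Xp \<Omega> p. \<forall>v\<in>Xp \<Omega> p. Xp_norm \<Omega> p u \<le> 1 \<longrightarrow> Xp_norm \<Omega> p v \<le> 1 \<longrightarrow>
      \<epsilon> \<le> Xp_norm \<Omega> p (Xp_add u (Xp_scale (-1) v)) \<longrightarrow>
      Xp_norm \<Omega> p (Xp_scale (1/2) (Xp_add u v)) \<le> 1 - \<delta>"
  proof (intro exI conjI ballI impI)
    fix u v assume "u \<in> Xp \<Omega> p" "v \<in> Xp \<Omega> p"
      and bounds: "Xp_norm \<Omega> p u \<le> 1" "Xp_norm \<Omega> p v \<le> 1"
        "\<epsilon> \<le> Xp_norm \<Omega> p (Xp_add u (Xp_scale (-1) v))"
    then obtain U G V H where uv: "u = (U, G)" "v = (V, H)"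
      and L: "in_Lr \<Omega> 2 U" "in_Lr \<Omega> 2 V" "in_Lr \<Omega> p G" "in_Lr \<Omega> p H"
      by (auto simp: Xp_def)
    show "Xp_norm \<Omega> p (Xp_scale (1/2) (Xp_add u v)) \<le> 1 - \<delta>"
      using \<delta>[OF L[THEN in_Lr_imp_zero_extension]] bounds
      by (simp add: uv norm Xp_add_def Xp_scale_def zero_extension_diff zero_extension_midpoint)
  qed (rule \<open>0 < \<delta>\<close>)
qed

theorem mainTheorem10:
  fixes \<Omega> :: "'a::euclidean_space set" and p :: real
  assumes "open \<Omega>" and "connected \<Omega>" and "\<Omega> \<noteq> {}"
    and "p > max 1 (2 * real DIM('a) / (real DIM('a) + 2))"
  shows "Xp_uniformly_convex \<Omega> p"
proof -
  have p: "1 < p"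
    using assms(4) by simp
  define q where "q = Xp_exponent p"
  have q: "0 < q" "1 \<le> q / 2" "1 \<le> q / p"
    using Xp_exponent_ge[OF p] p by (auto simp: q_def)
  show ?thesis
  proof (rule Xp_uniformly_convexI)
    show "midpoint_convex_functional (Lr_functions lebesgue 2)
        (\<lambda>F::'a \<Rightarrow> real \<times> real. Lr_modular lebesgue 2 F powr (q / 2))"
      "midpoint_convex_functional (Lr_functions lebesgue p)
        (\<lambda>G::'a \<Rightarrow> 'a \<times> 'a. Lr_modular lebesgue p G powr (q / p))"
      using p q by (auto intro!: midpoint_convex_functional_powr Lr_modular_midpoint_convex Lr_modular_nonneg)
    show "uniformly_convex_functional (Lr_functions lebesgue 2)
        (\<lambda>F::'a \<Rightarrow> real \<times> real. Lr_modular lebesgue 2 F powr (q / 2))"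
      "uniformly_convex_functional (Lr_functions lebesgue p)
        (\<lambda>G::'a \<Rightarrow> 'a \<times> 'a. Lr_modular lebesgue p G powr (q / p))"
      using p q by (auto intro: Lr_modular_powr_uniformly_convex)
  qed (use q in \<open>simp_all add: q_def Xp_norm_eq\<close>)
qed

end
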